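(* Let $R$ be a commutative $E$-algebra and $\lambda:E[\Sigma^+]\to R$ a ring homomorphism. If there exists $\eta\in\Sigma^{++}$ with $\lambda(\eta)\in R^\times$, then $\lambda(\delta)\in R^\times$ for all $\delta\in\Sigma^{++}$.
   Context: $L$ is a finite extension of $\mathbb Q_p$ and $E\supseteq L$ a field. $G$ is connected reductive over $L$, $S$ a maximal split torus, $\Delta$ simple relative roots defining a minimal parabolic, $P$ a parabolic containing it with Levi $M$, $T=Z(M)\cap S$; a positive root $\alpha$ is free if $-\alpha$ is not a root of $P$, and $\Delta_f$ is the set of free simple roots. $M_0\subseteq M(L)$ is compact open. $\Sigma\subseteq T(L)$ is the free abelian group generated by finitely many elements whose images form a $\mathbb Q$-basis of $(T(L)/T(L)\cap M_0)\otimes\mathbb Q$; $\Sigma^+$ (resp. $\Sigma^{++}$) is the set of $z\in\Sigma$ with $|\alpha(z)|\ge1$ (resp. $|\alpha(z)|>1$) for all $\alpha\in\Delta_f$; $E[\Sigma^+]$ is the monoid algebra. *)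

theory Defs
  imports Complex_Main "HOL-Library.Poly_Mapping" "HOL-Library.Function_Algebras"
begin

text \<open>The lattice \<Sigma> is modelled as the free abelian group \<open>'n \<Rightarrow> int\<close> (with \<open>'n\<close> a finite
  type indexing the chosen free generators), written additively.  The absolute values
  \<open>|\<alpha>(z)|\<close> for \<open>\<alpha>\<close> in the set of free simple roots are given by a family
  \<open>absv \<alpha> :: ('n \<Rightarrow> int) \<Rightarrow> real\<close>, assumed to be homomorphisms into the positive reals.\<close>

definition Sigma_plus :: "('i \<Rightarrow> ('n \<Rightarrow> int) \<Rightarrow> real) \<Rightarrow> 'i set \<Rightarrow> ('n \<Rightarrow> int) set" where
  "Sigma_plus absv Df = {z. \<forall>\<alpha>\<in>Df. absv \<alpha> z \<ge> 1}"

definition Sigma_pp :: "('i \<Rightarrow> ('n \<Rightarrow> int) \<Rightarrow> real) \<Rightarrow> 'i set \<Rightarrow> ('n \<Rightarrow> int) set" where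
  "Sigma_pp absv Df = {z. \<forall>\<alpha>\<in>Df. absv \<alpha> z > 1}"

text \<open>The monoid algebra \<open>E[\<Sigma>^+]\<close>, as the subring of the group algebra \<open>E[\<Sigma>] = (\<Sigma> \<Rightarrow>\<^sub>0 E)\<close>
  of finitely supported functions supported in \<open>\<Sigma>^+\<close>.\<close>
definition monoid_alg :: "('n \<Rightarrow> int) set \<Rightarrow> (('n \<Rightarrow> int) \<Rightarrow>\<^sub>0 'e::field) set" where
  "monoid_alg S = {f. Poly_Mapping.keys f \<subseteq> S}"

definition ring_hom_on :: "'a::ring_1 set \<Rightarrow> ('a \<Rightarrow> 'b::ring_1) \<Rightarrow> bool" where
  "ring_hom_on A h \<longleftrightarrow> h 1 = 1 \<and>
     (\<forall>x\<in>A. \<forall>y\<in>A. h (x + y) = h x + h y \<and> h (x * y) = h x * h y)"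

end

theory Submission
  imports Defs
begin

text \<open>Since \<open>|\<alpha>(\<eta>)| > 1\<close> for each of the finitely many free simple roots \<open>\<alpha>\<close>, some multiple
  \<open>m\<eta>\<close> dominates \<open>\<delta>\<close> at every \<open>\<alpha>\<close>, i.e. \<open>m\<eta> - \<delta> \<in> \<Sigma>\<^sup>+\<close>.  Hence \<open>\<eta>\<^sup>m = (m\<eta> - \<delta>) \<cdot> \<delta>\<close> in
  \<open>E[\<Sigma>\<^sup>+]\<close>, so \<open>\<lambda>(\<delta>)\<close> divides the unit \<open>\<lambda>(\<eta>)\<^sup>m\<close>.\<close>

lemma mult_hom_zero:
  fixes \<chi> :: "'a::monoid_add \<Rightarrow> real"
  assumes "\<And>x y. \<chi> (x + y) = \<chi> x * \<chi> y" and "\<chi> 0 > 0"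
  shows "\<chi> 0 = 1"
  using assms(1)[of 0 0] assms(2) by simp

lemma mult_hom_sum:
  fixes \<chi> :: "'a::comm_monoid_add \<Rightarrow> real"
  assumes "\<And>x y. \<chi> (x + y) = \<chi> x * \<chi> y" and "\<chi> 0 > 0"
  shows "\<chi> (\<Sum>i\<in>A. f i) = (\<Prod>i\<in>A. \<chi> (f i))"
proof (induction A rule: infinite_finite_induct)
  case (infinite A)
  then show ?case using mult_hom_zero[OF assms] by simp
next
  case empty
  then show ?case using mult_hom_zero[OF assms] by simp
next
  case (insert a A)
  then show ?case by (simp add: assms(1))
qed

lemma mult_hom_diff:
  fixes \<chi> :: "'a::ab_group_add \<Rightarrow> real"
  assumes "\<And>x y. \<chi> (x + y) = \<chi> x * \<chi> y" and "\<And>x. \<chi> x > 0"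
  shows "\<chi> (x - y) = \<chi> x / \<chi> y"
proof -
  have "\<chi> (x - y) * \<chi> y = \<chi> x"
    using assms(1)[of "x - y" y] by simp
  with assms(2)[of y] show ?thesis by (simp add: field_simps)
qed

lemma zero_mem_Sigma_plus:
  assumes "\<And>\<alpha> x y. \<alpha> \<in> Df \<Longrightarrow> absv \<alpha> (x + y) = absv \<alpha> x * absv \<alpha> y"
    and "\<And>\<alpha> z. \<alpha> \<in> Df \<Longrightarrow> absv \<alpha> z > 0"
  shows "0 \<in> Sigma_plus absv Df"
proof -
  have "absv \<alpha> 0 = 1" if "\<alpha> \<in> Df" for \<alpha>
    using mult_hom_zero[of "absv \<alpha>"] assms that by blast
  then show ?thesis by (simp add: Sigma_plus_def)
qed

lemma add_mem_Sigma_plus: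
  assumes "\<And>\<alpha> x y. \<alpha> \<in> Df \<Longrightarrow> absv \<alpha> (x + y) = absv \<alpha> x * absv \<alpha> y"
    and "x \<in> Sigma_plus absv Df" and "y \<in> Sigma_plus absv Df"
  shows "x + y \<in> Sigma_plus absv Df"
  using assms mult_mono[of 1 _ 1] by (fastforce simp: Sigma_plus_def)

lemma Sigma_pp_subset_Sigma_plus: "Sigma_pp absv Df \<subseteq> Sigma_plus absv Df"
  by (auto simp: Sigma_plus_def Sigma_pp_def)

lemma ring_hom_on_single_add:
  assumes "ring_hom_on (monoid_alg S) lam" and "x \<in> S" and "y \<in> S"
  shows "lam (Poly_Mapping.single (x + y) (1::'e::field)) =
           lam (Poly_Mapping.single x 1) * lam (Poly_Mapping.single y 1)"
proof -
  have "Poly_Mapping.single x (1::'e) \<in> monoid_alg S" "Poly_Mapping.single y (1::'e) \<in> monoid_alg S"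
    using assms(2,3) by (simp_all add: monoid_alg_def)
  with assms(1) show ?thesis
    unfolding ring_hom_on_def by (metis mult_single mult_1)
qed

lemma ring_hom_on_single_multiple:
  assumes "ring_hom_on (monoid_alg S) lam" and "0 \<in> S"
    and "\<And>x y. x \<in> S \<Longrightarrow> y \<in> S \<Longrightarrow> x + y \<in> S" and "x \<in> S"
  shows "(\<Sum>i<m. x) \<in> S \<and>
    lam (Poly_Mapping.single (\<Sum>i<m. x) (1::'e::field)) = lam (Poly_Mapping.single x 1) ^ m"
proof (induction m)
  case 0
  then show ?case
    using assms(1,2) unfolding ring_hom_on_def by (simp only: sum.empty lessThan_0 single_one power_0)
next
  case (Suc m)
  then have mem: "(\<Sum>i<m. x) \<in> S" and pow: "lam (Poly_Mapping.single (\<Sum>i<m. x) 1) =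
    lam (Poly_Mapping.single x 1) ^ m" by blast+
  have "lam (Poly_Mapping.single (\<Sum>i<Suc m. x) (1::'e)) =
      lam (Poly_Mapping.single (\<Sum>i<m. x) 1) * lam (Poly_Mapping.single x 1)"
    unfolding sum.lessThan_Suc by (rule ring_hom_on_single_add[OF assms(1) mem assms(4)])
  also have "\<dots> = lam (Poly_Mapping.single x 1) ^ Suc m"
    by (simp only: pow power_Suc2)
  finally show ?case
    using assms(3,4) mem by (simp only: sum.lessThan_Suc)
qed

lemma Sigma_pp_archimedean:
  assumes "finite Df" and "\<eta> \<in> Sigma_pp absv Df"
  shows "\<exists>m. \<forall>\<alpha>\<in>Df. absv \<alpha> \<delta> \<le> absv \<alpha> \<eta> ^ m"
proof -
  have "\<forall>\<alpha>\<in>Df. \<exists>k. absv \<alpha> \<delta> < absv \<alpha> \<eta> ^ k"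
    using assms(2) by (auto simp: Sigma_pp_def intro: real_arch_pow)
  then obtain k where k: "\<And>\<alpha>. \<alpha> \<in> Df \<Longrightarrow> absv \<alpha> \<delta> < absv \<alpha> \<eta> ^ k \<alpha>"
    by metis
  have "absv \<alpha> \<delta> \<le> absv \<alpha> \<eta> ^ sum k Df" if "\<alpha> \<in> Df" for \<alpha>
  proof -
    have "k \<alpha> \<le> sum k Df" using assms(1) that by (simp add: member_le_sum)
    moreover have "absv \<alpha> \<eta> > 1" using assms(2) that by (simp add: Sigma_pp_def)
    ultimately have "absv \<alpha> \<eta> ^ k \<alpha> \<le> absv \<alpha> \<eta> ^ sum k Df" by (simp add: power_increasing)
    with k[OF that] show ?thesis by simp
  qed
  then show ?thesis by blast
qed

lemma multiple_diff_mem_Sigma_plus: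
  assumes "finite Df"
    and "\<And>\<alpha> z. \<alpha> \<in> Df \<Longrightarrow> absv \<alpha> z > 0"
    and "\<And>\<alpha> x y. \<alpha> \<in> Df \<Longrightarrow> absv \<alpha> (x + y) = absv \<alpha> x * absv \<alpha> y"
    and "\<eta> \<in> Sigma_pp absv Df"
  obtains m :: nat where "(\<Sum>i<m. \<eta>) - \<delta> \<in> Sigma_plus absv Df"
proof -
  obtain m where m: "\<And>\<alpha>. \<alpha> \<in> Df \<Longrightarrow> absv \<alpha> \<delta> \<le> absv \<alpha> \<eta> ^ m"
    using Sigma_pp_archimedean[OF assms(1,4), of \<delta>] by blast
  have "absv \<alpha> ((\<Sum>i<m. \<eta>) - \<delta>) \<ge> 1" if \<alpha>: "\<alpha> \<in> Df" for \<alpha>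
  proof -
    have "absv \<alpha> (\<Sum>i<m. \<eta>) = absv \<alpha> \<eta> ^ m"
      using mult_hom_sum[of "absv \<alpha>" "\<lambda>_::nat. \<eta>" "{..<m}"] assms(2,3) \<alpha> by simp
    then have "absv \<alpha> ((\<Sum>i<m. \<eta>) - \<delta>) = absv \<alpha> \<eta> ^ m / absv \<alpha> \<delta>"
      using mult_hom_diff[of "absv \<alpha>"] assms(2,3) \<alpha> by simp
    with m[OF \<alpha>] assms(2)[OF \<alpha>] show ?thesis by simp
  qed
  then show ?thesis by (intro that[of m]) (simp add: Sigma_plus_def)
qed

theorem mainTheorem17:
  fixes absv :: "'i \<Rightarrow> ('n::finite \<Rightarrow> int) \<Rightarrow> real"
    and Df :: "'i set"
    and alg :: "'e::field \<Rightarrow> 'r::comm_ring_1"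
    and lam :: "(('n \<Rightarrow> int) \<Rightarrow>\<^sub>0 'e) \<Rightarrow> 'r"
    and \<eta> \<delta> :: "'n \<Rightarrow> int"
  assumes Df_fin: "finite Df"
    and absv_pos: "\<And>\<alpha> z. \<alpha> \<in> Df \<Longrightarrow> absv \<alpha> z > 0"
    and absv_hom: "\<And>\<alpha> x y. \<alpha> \<in> Df \<Longrightarrow> absv \<alpha> (x + y) = absv \<alpha> x * absv \<alpha> y"
    and alg_hom: "alg 1 = 1" "\<And>a b. alg (a + b) = alg a + alg b" "\<And>a b. alg (a * b) = alg a * alg b"
    and lam_hom: "ring_hom_on (monoid_alg (Sigma_plus absv Df)) lam"
    and eta: "\<eta> \<in> Sigma_pp absv Df"
    and eta_unit: "lam (Poly_Mapping.single \<eta> 1) dvd 1"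
    and delta: "\<delta> \<in> Sigma_pp absv Df"
  shows "lam (Poly_Mapping.single \<delta> 1) dvd 1"
proof -
  let ?S = "Sigma_plus absv Df" and ?mon = "\<lambda>x. lam (Poly_Mapping.single x (1::'e))"
  have eta_S: "\<eta> \<in> ?S" and delta_S: "\<delta> \<in> ?S"
    using eta delta Sigma_pp_subset_Sigma_plus by blast+
  obtain m :: nat where z: "(\<Sum>i<m. \<eta>) - \<delta> \<in> ?S"
    using multiple_diff_mem_Sigma_plus[where absv = absv and \<delta> = \<delta>, OF Df_fin absv_pos absv_hom eta] .
  have S_zero: "0 \<in> ?S"
    by (rule zero_mem_Sigma_plus[where absv = absv and Df = Df, OF absv_hom absv_pos])
  have S_add: "\<And>x y. x \<in> ?S \<Longrightarrow> y \<in> ?S \<Longrightarrow> x + y \<in> ?S"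
    by (rule add_mem_Sigma_plus[where absv = absv and Df = Df, OF absv_hom])
  have "?mon \<eta> ^ m = ?mon (\<Sum>i<m. \<eta>)"
    using ring_hom_on_single_multiple[OF lam_hom S_zero S_add eta_S, of m] by simp
  also have "\<dots> = ?mon ((\<Sum>i<m. \<eta>) - \<delta>) * ?mon \<delta>"
    using ring_hom_on_single_add[OF lam_hom z delta_S] by (simp only: diff_add_cancel)
  finally have "?mon \<delta> dvd ?mon \<eta> ^ m" by (simp only: dvd_triv_right)
  moreover have "?mon \<eta> ^ m dvd 1"
    using eta_unit by (metis dvd_power_same power_one)
  ultimately show ?thesis by (rule dvd_trans)
qed

end
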